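(* Let $L\subset\mathbb{C}$ be a single slit domain, i.e. the complex plane minus a single slit lying on the negative real axis. Let $f=h+\overline{g}\in\mathcal{S}_H^0$ map $\mathbb{D}$ onto $L$, satisfy $h(z)-g(z)=\frac{z}{(1-z)^2}$ for $z\in\mathbb{D}$, and have dilatation $\omega=g'/h'=b^2$ with $b(z)=\varepsilon z$, $\varepsilon\in\{1,-1\}$. Let $S$ be the minimal surface over $L$ with projection $f$, i.e. $S=\{(u(z),v(z),F(z)):z\in\mathbb{D}\}$ with $u=\mathrm{Re}\,f$, $v=\mathrm{Im}\,f$, $F(z)=\mathrm{Re}\int_0^z2ib(t)h'(t)\,dt+c$, $c\in\mathbb{R}$. Then $$u=\mathrm{Re}\left(\frac{2z^3-3z^2+3z}{3(1-z)^3}\right),\qquad v=\mathrm{Im}\left(\frac{z}{(1-z)^2}\right),\qquad F=\pm\mathrm{Im}\left(\frac{1}{(z-1)^2}+\frac{2}{3(z-1)^3}\right)+c,$$ where the sign $\pm$ corresponds to $\varepsilon$ and $c$ is a real constant.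
   Context: $\mathbb{D}$ is the unit disk. A harmonic mapping $f=h+\overline g$ ($h,g$ analytic on $\mathbb{D}$) is sense-preserving if $h'\ne0$ and its dilatation $\omega=g'/h'$ satisfies $|\omega|<1$. $\mathcal{S}_H^0$ is the class of sense-preserving univalent harmonic mappings $f=h+\overline g$ on $\mathbb{D}$ with $h(0)=g(0)=0$, $h'(0)=1$, $g'(0)=0$. Minimal surface with projection $f$ (Weierstrass–Enneper): $S=\{(\mathrm{Re}\int_0^z\phi_1+c_1,\mathrm{Re}\int_0^z\phi_2+c_2,\mathrm{Re}\int_0^z\phi_3+c_3)\}$ with $\phi_j$ analytic, $\phi_1^2+\phi_2^2+\phi_3^2=0$, $f=\mathrm{Re}\int_0^z\phi_1+i\,\mathrm{Re}\int_0^z\phi_2$ univalent sense-preserving harmonic onto the domain; for $\omega=b^2$, $b(z)=\pm z$, one has $\phi_1=h'+g'$, $\phi_2=-i(h'-g')$, $\phi_3=2ibh'$. *)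

theory Defs
  imports "HOL-Complex_Analysis.Complex_Analysis"
begin

abbreviation unit_disk :: "complex set" where
  "unit_disk \<equiv> ball 0 1"

definition harm :: "(complex \<Rightarrow> complex) \<Rightarrow> (complex \<Rightarrow> complex) \<Rightarrow> complex \<Rightarrow> complex" where
  "harm h g z = h z + cnj (g z)"

text \<open>Class S_H^0: sense-preserving univalent harmonic maps f = h + conj g on the disk
  with h(0)=g(0)=0, h'(0)=1, g'(0)=0.  Sense-preserving: h' nonzero and
  the dilatation g'/h' has modulus < 1.\<close>
definition SH0 :: "(complex \<Rightarrow> complex) \<Rightarrow> (complex \<Rightarrow> complex) \<Rightarrow> bool" where
  "SH0 h g \<longleftrightarrow>
     h holomorphic_on unit_disk \<and> g holomorphic_on unit_disk \<and>
     h 0 = 0 \<and> g 0 = 0 \<and> deriv h 0 = 1 \<and> deriv g 0 = 0 \<and>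
     (\<forall>z\<in>unit_disk. deriv h z \<noteq> 0 \<and> norm (deriv g z / deriv h z) < 1) \<and>
     inj_on (harm h g) unit_disk"

definition single_slit_domain :: "complex set \<Rightarrow> bool" where
  "single_slit_domain L \<longleftrightarrow>
     (\<exists>a::real. a > 0 \<and> L = UNIV - {complex_of_real t | t. t \<le> -a})"

definition min_surf_height ::
  "(complex \<Rightarrow> complex) \<Rightarrow> real \<Rightarrow> real \<Rightarrow> complex \<Rightarrow> real" where
  "min_surf_height h eps c z =
     Re (contour_integral (linepath 0 z)
           (\<lambda>t. 2 * \<i> * (complex_of_real eps * t) * deriv h t)) + c"

end

theory Submission
  imports Defs
begin

text \<open>
  The shear construction: since \<open>h - g = k\<close> with the Koebe function \<open>k(z) = z/(1-z)^2\<close> and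
  \<open>g' = z^2 h'\<close>, we get \<open>(1 - z^2) h' = k' = (1+z)/(1-z)^3\<close>, i.e. \<open>h' = 1/(1-z)^4\<close>.
  Integrating with \<open>h(0) = 0\<close> gives \<open>h\<close> explicitly, hence \<open>g = h - k\<close> and \<open>f = h + conj g\<close>;
  the height \<open>F\<close> is the real part of a contour integral of \<open>2 i \<epsilon> t/(1-t)^4\<close>, which has an
  elementary primitive.
\<close>

definition koebe :: "complex \<Rightarrow> complex" where
  "koebe z = z / (1 - z)^2"

definition shear_h :: "complex \<Rightarrow> complex" where
  "shear_h z = (1 / (1 - z)^3 - 1) / 3"

definition height_primitive :: "complex \<Rightarrow> complex" where
  "height_primitive z = 1 / (3 * (1 - z)^3) - 1 / (2 * (1 - z)^2)"

lemma unit_disk_one_minus_nonzero: "z \<in> unit_disk \<Longrightarrow> 1 - z \<noteq> 0"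
  by auto

lemma unit_disk_one_plus_nonzero: "z \<in> unit_disk \<Longrightarrow> 1 + z \<noteq> 0"
  by (metis add_eq_0_iff mem_ball_0 norm_minus_cancel norm_one order.irrefl)

lemma koebe_has_field_derivative:
  assumes "1 - z \<noteq> 0"
  shows "(koebe has_field_derivative (1 + z) / (1 - z)^3) (at z)"
  unfolding koebe_def [abs_def]
  apply (rule derivative_eq_intros refl | use assms in \<open>simp; fail\<close>)+
  using assms
  by (simp add: divide_simps)
     (simp add: algebra_simps power2_eq_square power3_eq_cube power4_eq_xxxx)

lemma shear_h_has_field_derivative:
  assumes "1 - z \<noteq> 0"
  shows "(shear_h has_field_derivative 1 / (1 - z)^4) (at z)"
  unfolding shear_h_def [abs_def]
  apply (rule derivative_eq_intros refl | use assms in \<open>simp; fail\<close>)+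
  using assms by (simp add: divide_simps)

lemma height_primitive_has_field_derivative:
  assumes "1 - z \<noteq> 0"
  shows "(height_primitive has_field_derivative z / (1 - z)^4) (at z)"
  unfolding height_primitive_def [abs_def]
  apply (rule derivative_eq_intros refl | use assms in \<open>simp; fail\<close>)+
  using assms by (simp add: divide_simps) algebra

lemma eq_on_convex_if_same_derivative:
  fixes f g :: "'a::real_normed_field \<Rightarrow> 'a"
  assumes "convex S" "a \<in> S" "f a = g a" "x \<in> S"
    and "\<And>x. x \<in> S \<Longrightarrow> (f has_field_derivative f' x) (at x within S)"
    and "\<And>x. x \<in> S \<Longrightarrow> (g has_field_derivative f' x) (at x within S)"
  shows "f x = g x"
proof -
  have "\<exists>c. \<forall>x\<in>S. f x - g x = c"
    by (rule has_field_derivative_zero_constant)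
       (use assms in \<open>auto intro!: derivative_eq_intros\<close>)
  then show ?thesis
    using assms(2-4) by (metis eq_iff_diff_eq_0)
qed

lemma deriv_diff_eq:
  assumes "h holomorphic_on S" "g holomorphic_on S" "open S" "z \<in> S"
    and "\<And>w. w \<in> S \<Longrightarrow> h w - g w = k w"
    and "(k has_field_derivative k') (at z)"
  shows "deriv h z - deriv g z = k'"
proof -
  have "((\<lambda>w. h w - g w) has_field_derivative deriv h z - deriv g z) (at z)"
    using assms(1-4) by (auto intro!: derivative_intros holomorphic_derivI)
  then have "(k has_field_derivative deriv h z - deriv g z) (at z)"
    by (rule has_field_derivative_transform_within_open) (use assms in auto)
  with assms(6) show ?thesis
    using DERIV_unique by blast
qed

lemma shear_deriv_eq:
  fixes z dh dg :: complex
  assumes "1 - z \<noteq> 0" "1 + z \<noteq> 0"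
    and "dg = z^2 * dh" "dh - dg = (1 + z) / (1 - z)^3"
  shows "dh = 1 / (1 - z)^4"
proof -
  have "(1 - z) * (1 + z) * dh = (1 + z) / (1 - z)^3"
    using assms(3,4) by (simp add: algebra_simps power2_eq_square)
  with assms(1,2) show ?thesis
    by (simp add: field_simps) algebra
qed

lemma deriv_h_eq_shear:
  assumes "SH0 h g"
    and "\<And>z. z \<in> unit_disk \<Longrightarrow> h z - g z = koebe z"
    and "\<And>z. z \<in> unit_disk \<Longrightarrow> deriv g z / deriv h z = z^2"
    and z: "z \<in> unit_disk"
  shows "deriv h z = 1 / (1 - z)^4"
proof (rule shear_deriv_eq)
  have hol: "h holomorphic_on unit_disk" "g holomorphic_on unit_disk"
    and "deriv h z \<noteq> 0"
    using assms(1) z unfolding SH0_def by auto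
  then show "deriv g z = z^2 * deriv h z"
    using assms(3)[OF z] by (simp add: field_simps)
  show "deriv h z - deriv g z = (1 + z) / (1 - z)^3"
    by (rule deriv_diff_eq[OF hol open_ball z assms(2)])
       (use z in \<open>auto intro: koebe_has_field_derivative\<close>)
qed (use unit_disk_one_minus_nonzero[OF z] unit_disk_one_plus_nonzero[OF z] in auto)

lemma h_eq_shear_h:
  assumes "SH0 h g"
    and "\<And>z. z \<in> unit_disk \<Longrightarrow> deriv h z = 1 / (1 - z)^4"
    and "z \<in> unit_disk"
  shows "h z = shear_h z"
proof (rule eq_on_convex_if_same_derivative[OF convex_ball _ _ \<open>z \<in> unit_disk\<close>])
  have "h holomorphic_on unit_disk" "h 0 = 0"
    using assms(1) unfolding SH0_def by auto
  then show "h 0 = shear_h 0" "\<And>x. x \<in> unit_disk \<Longrightarrow>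
      (h has_field_derivative 1 / (1 - x)^4) (at x within unit_disk)"
    by (auto simp: shear_h_def assms(2)[symmetric] intro: holomorphic_derivI)
  show "(shear_h has_field_derivative 1 / (1 - x)^4) (at x within unit_disk)"
    if "x \<in> unit_disk" for x
    using that unit_disk_one_minus_nonzero
    by (blast intro: has_field_derivative_at_within shear_h_has_field_derivative)
qed simp

lemma min_surf_height_eq:
  assumes "\<And>t. t \<in> unit_disk \<Longrightarrow> deriv h t = 1 / (1 - t)^4"
    and z: "z \<in> unit_disk"
  shows "min_surf_height h eps c z = eps * Im (1 / (z - 1)^2 + 2 / (3 * (z - 1)^3)) + c"
proof -
  define G where "G t = 2 * \<i> * complex_of_real eps * height_primitive t" for t
  have G_deriv: "(G has_field_derivative 2 * \<i> * (complex_of_real eps * t) * deriv h t)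
      (at t within unit_disk)" if "t \<in> unit_disk" for t
  proof -
    have "(G has_field_derivative 2 * \<i> * complex_of_real eps * (t / (1 - t)^4)) (at t)"
      unfolding G_def [abs_def] using that
      by (intro DERIV_cmult height_primitive_has_field_derivative) auto
    then show ?thesis
      using that by (simp add: assms(1) has_field_derivative_at_within mult.assoc)
  qed
  have "path_image (linepath 0 z) \<subseteq> unit_disk"
    using z by (simp add: closed_segment_subset convex_ball)
  then have "((\<lambda>t. 2 * \<i> * (complex_of_real eps * t) * deriv h t) has_contour_integral G z - G 0)
      (linepath 0 z)"
    using contour_integral_primitive[OF G_deriv valid_path_linepath] by simp
  then have "contour_integral (linepath 0 z)
      (\<lambda>t. 2 * \<i> * (complex_of_real eps * t) * deriv h t) = G z - G 0"
    by (rule contour_integral_unique)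
  also have "\<dots> = - (\<i> * complex_of_real eps * (1 / (z - 1)^2 + 2 / (3 * (z - 1)^3)))
                  + \<i> * complex_of_real eps / 3"
    using unit_disk_one_minus_nonzero[OF z]
    by (simp add: G_def height_primitive_def field_simps) algebra
  finally show ?thesis
    unfolding min_surf_height_def by simp
qed

theorem theorem4p1:
  fixes h g :: "complex \<Rightarrow> complex" and L :: "complex set"
    and eps c :: real
  assumes "single_slit_domain L"
    and "SH0 h g"
    and "harm h g ` unit_disk = L"
    and "\<forall>z\<in>unit_disk. h z - g z = z / (1 - z)^2"
    and "eps \<in> {1, -1}"
    and "\<forall>z\<in>unit_disk. deriv g z / deriv h z = (complex_of_real eps * z)^2"
  shows "\<forall>z\<in>unit_disk.
           Re (harm h g z) = Re ((2*z^3 - 3*z^2 + 3*z) / (3 * (1 - z)^3)) \<and>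
           Im (harm h g z) = Im (z / (1 - z)^2) \<and>
           min_surf_height h eps c z =
             eps * Im (1 / (z - 1)^2 + 2 / (3 * (z - 1)^3)) + c"
proof
  fix z assume z: "z \<in> unit_disk"
  have "(complex_of_real eps)^2 = 1"
    using assms(5) by auto
  then have dh: "\<And>t. t \<in> unit_disk \<Longrightarrow> deriv h t = 1 / (1 - t)^4"
    using assms(4,6)
    by (intro deriv_h_eq_shear[OF assms(2)]) (auto simp: koebe_def power_mult_distrib)
  have h: "h z = shear_h z"
    using h_eq_shear_h[OF assms(2) dh z] .
  have g: "g z = shear_h z - koebe z"
    using assms(4) z h by (auto simp: koebe_def algebra_simps)
  have f_eq: "(2*z^3 - 3*z^2 + 3*z) / (3 * (1 - z)^3) = shear_h z + (shear_h z - koebe z)"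
    using unit_disk_one_minus_nonzero[OF z]
    by (simp add: shear_h_def koebe_def field_simps) algebra
  show "Re (harm h g z) = Re ((2*z^3 - 3*z^2 + 3*z) / (3 * (1 - z)^3)) \<and>
      Im (harm h g z) = Im (z / (1 - z)^2) \<and>
      min_surf_height h eps c z = eps * Im (1 / (z - 1)^2 + 2 / (3 * (z - 1)^3)) + c"
    unfolding f_eq koebe_def[symmetric] using min_surf_height_eq[OF dh z]
    by (simp add: harm_def h g)
qed

end
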